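(* Let $f$, $X_n$, $X$, $Y$ be as in the context and let $n\geq 2$ (equivalently $f(n)\geq 2$). Every finite subgraph $\Gamma$ of $X$ with $|V\Gamma|\leq |VX_n|=(2^{2^{2n}}f(n)+1)f(n)$ admits a coarse $f(n)$-wiring into $Y$ of volume at most $2|VX_n|$. Hence \[ \mathrm{wir}^{f(n)}_{X\to Y}\big(|VX_n|\big)\leq 2|VX_n|. \]
   Context: Fix a function $f:\mathbb{N}\to\mathbb{N}$ (with $\mathbb{N}=\{1,2,\dots\}$) that is surjective, satisfies $f(1)=1$, $2\leq f(n)\leq n$ for all $n\geq 2$, and $|f^{-1}(k)|=\infty$ for every $k\geq 2$. For $n\in\mathbb{N}$ let $X_n$ be the graph with vertex set $\{0,1,\dots,f(n)-1\}\times\{0,1,\dots,2^{2^{2n}}f(n)\}$, with edges $(i,j)(i,j+1)$ for all $0\leq i\leq f(n)-1$, $0\leq j\leq 2^{2^{2n}}f(n)-1$, and $(i,j)(i+1,j)$ for all $0\leq i\leq f(n)-2$ and all $j$ that are multiples of $2^{2^{2n}}$. Let $Y_n$ be defined in the same way with $2^{2^{2n}}$ replaced everywhere by $2^{2^{2n+1}}$. Let $X=\bigsqcup_{n\geq1}X_n$ and $Y=\bigsqcup_{n\geq 1}Y_n$ (disjoint unions). A wiring of a finite graph $\Gamma$ into a graph $Y$ is a continuous map $g:\Gamma\to Y$ sending vertices to vertices and each edge onto a union of edges (a path between the images of its endpoints, or a single vertex if these coincide). It is a coarse $k$-wiring if each vertex of $Y$ has at most $k$ preimage vertices and each edge of $Y$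 is contained in the images of at most $k$ edges of $\Gamma$. Its volume is the number of vertices in its image. $\mathrm{wir}^k(\Gamma\to Y)$ is the minimal volume of a coarse $k$-wiring ($+\infty$ if none), and $\mathrm{wir}^k_{X\to Y}(n)=\max\{\mathrm{wir}^k(\Gamma\to Y):\Gamma\subseteq X,\ |V\Gamma|\leq n\}$. *)

theory Defs
  imports Main "HOL-Library.Extended_Nat"
begin

text \<open>Graphs are pairs (V, E) with V a vertex set and E a set of undirected edges,
  each edge being a two-element set of vertices.\<close>

type_synonym 'v graph = "'v set \<times> 'v set set"

definition ladderV :: "(nat \<Rightarrow> nat) \<Rightarrow> nat \<Rightarrow> nat \<Rightarrow> (nat \<times> nat \<times> nat) set" where
  "ladderV f L n = {(n, i, j) | i j. i < f n \<and> j \<le> L * f n}"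

definition ladderE :: "(nat \<Rightarrow> nat) \<Rightarrow> nat \<Rightarrow> nat \<Rightarrow> (nat \<times> nat \<times> nat) set set" where
  "ladderE f L n =
     {{(n, i, j), (n, i, j + 1)} | i j. i < f n \<and> j < L * f n}
   \<union> {{(n, i, j), (n, i + 1, j)} | i j. i + 1 < f n \<and> j \<le> L * f n \<and> L dvd j}"

definition XnV :: "(nat \<Rightarrow> nat) \<Rightarrow> nat \<Rightarrow> (nat \<times> nat \<times> nat) set" where
  "XnV f n = ladderV f (2 ^ (2 ^ (2 * n))) n"
definition XnE :: "(nat \<Rightarrow> nat) \<Rightarrow> nat \<Rightarrow> (nat \<times> nat \<times> nat) set set" where
  "XnE f n = ladderE f (2 ^ (2 ^ (2 * n))) n"
definition YnV :: "(nat \<Rightarrow> nat) \<Rightarrow> nat \<Rightarrow> (nat \<times> nat \<times> nat) set" where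
  "YnV f n = ladderV f (2 ^ (2 ^ (2 * n + 1))) n"
definition YnE :: "(nat \<Rightarrow> nat) \<Rightarrow> nat \<Rightarrow> (nat \<times> nat \<times> nat) set set" where
  "YnE f n = ladderE f (2 ^ (2 ^ (2 * n + 1))) n"

text \<open>Disjoint unions over n \<ge> 1 (the first coordinate records the component).\<close>

definition Xgraph :: "(nat \<Rightarrow> nat) \<Rightarrow> (nat \<times> nat \<times> nat) graph" where
  "Xgraph f = ((\<Union>n\<in>{1..}. XnV f n), (\<Union>n\<in>{1..}. XnE f n))"
definition Ygraph :: "(nat \<Rightarrow> nat) \<Rightarrow> (nat \<times> nat \<times> nat) graph" where
  "Ygraph f = ((\<Union>n\<in>{1..}. YnV f n), (\<Union>n\<in>{1..}. YnE f n))"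

definition finite_subgraph :: "'v graph \<Rightarrow> 'v graph \<Rightarrow> bool" where
  "finite_subgraph \<Gamma> G \<longleftrightarrow> finite (fst \<Gamma>) \<and> fst \<Gamma> \<subseteq> fst G \<and> snd \<Gamma> \<subseteq> snd G
      \<and> (\<forall>e\<in>snd \<Gamma>. e \<subseteq> fst \<Gamma>)"

definition is_path :: "'v graph \<Rightarrow> 'v list \<Rightarrow> 'v \<Rightarrow> 'v \<Rightarrow> bool" where
  "is_path G xs a b \<longleftrightarrow> xs \<noteq> [] \<and> hd xs = a \<and> last xs = b \<and> distinct xs
      \<and> set xs \<subseteq> fst G \<and> (\<forall>i. i + 1 < length xs \<longrightarrow> {xs ! i, xs ! (i + 1)} \<in> snd G)"

definition path_edges :: "'v list \<Rightarrow> 'v set set" where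
  "path_edges xs = {{xs ! i, xs ! (i + 1)} | i. i + 1 < length xs}"

definition wiring :: "'a graph \<Rightarrow> 'b graph \<Rightarrow> ('a \<Rightarrow> 'b) \<Rightarrow> ('a set \<Rightarrow> 'b list) \<Rightarrow> bool" where
  "wiring \<Gamma> G \<phi> P \<longleftrightarrow> (\<forall>v\<in>fst \<Gamma>. \<phi> v \<in> fst G)
      \<and> (\<forall>e\<in>snd \<Gamma>. \<exists>u v. e = {u, v} \<and> is_path G (P e) (\<phi> u) (\<phi> v))"

definition coarse_wiring :: "nat \<Rightarrow> 'a graph \<Rightarrow> 'b graph \<Rightarrow> ('a \<Rightarrow> 'b) \<Rightarrow> ('a set \<Rightarrow> 'b list) \<Rightarrow> bool" where
  "coarse_wiring k \<Gamma> G \<phi> P \<longleftrightarrow> wiring \<Gamma> G \<phi> P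
      \<and> (\<forall>y\<in>fst G. card {v\<in>fst \<Gamma>. \<phi> v = y} \<le> k)
      \<and> (\<forall>d\<in>snd G. card {e\<in>snd \<Gamma>. d \<in> path_edges (P e)} \<le> k)"

definition wiring_volume :: "'a graph \<Rightarrow> ('a \<Rightarrow> 'b) \<Rightarrow> ('a set \<Rightarrow> 'b list) \<Rightarrow> nat" where
  "wiring_volume \<Gamma> \<phi> P = card (\<phi> ` fst \<Gamma> \<union> (\<Union>e\<in>snd \<Gamma>. set (P e)))"

definition wir :: "nat \<Rightarrow> 'a graph \<Rightarrow> 'b graph \<Rightarrow> enat" where
  "wir k \<Gamma> G = Inf {enat (wiring_volume \<Gamma> \<phi> P) | \<phi> P. coarse_wiring k \<Gamma> G \<phi> P}"

definition wir_fun :: "nat \<Rightarrow> 'a graph \<Rightarrow> 'b graph \<Rightarrow> nat \<Rightarrow> enat" where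
  "wir_fun k X Y n = Sup {wir k \<Gamma> Y | \<Gamma>. finite_subgraph \<Gamma> X \<and> card (fst \<Gamma>) \<le> n}"

end

theory Submission
  imports Defs
begin

(* \<Gamma> is wired component by component. A component X_m with m < n is mapped into Y_m by scaling
   heights by L_m = 2^2^(2m), the rung spacing of Y_m being L_m^2; all these images lie in the box
   [0,n) \<times> [0,n) \<times> [0, L_(n-1)^2 n], which has at most |VX_n| vertices because L_n = L_(n-1)^4.
   The component X_n is collapsed onto its first column, so fibres and congestion are at most f n.
   For m > n, \<Gamma> has fewer than L_m - 1 vertices, so every block [q L_m, (q+1) L_m) of heights has
   a height q L_m + s_q with 0 < s_q < L_m carrying no vertex of \<Gamma>. Cutting the block there and
   stretching it onto [q L_m^2, (q+1) L_m^2) is injective, sends rungs to rungs and keeps the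
   vertical edges of \<Gamma> vertical. The image thus has at most |V\<Gamma>| + |VX_n| \<le> 2 |VX_n| vertices. *)

definition rung_spacing :: "nat \<Rightarrow> nat" where
  "rung_spacing m = 2 ^ 2 ^ (2 * m)"

lemma Y_rung_spacing: "2 ^ 2 ^ (2 * m + 1) = rung_spacing m * rung_spacing m"
  unfolding rung_spacing_def by (simp flip: power_add)

lemma rung_spacing_ge_2: "2 \<le> rung_spacing m"
  unfolding rung_spacing_def using power_increasing[of 1 "2 ^ (2 * m)" "2::nat"] by simp

lemma rung_spacing_mono: "m \<le> m' \<Longrightarrow> rung_spacing m \<le> rung_spacing m'"
  unfolding rung_spacing_def by (intro power_increasing) auto

lemma rung_spacing_Suc:
  "rung_spacing (Suc m) = (rung_spacing m * rung_spacing m) * (rung_spacing m * rung_spacing m)"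
proof -
  have "rung_spacing (Suc m) = rung_spacing m ^ 4"
    unfolding rung_spacing_def by (simp add: power_add flip: power_mult)
  then show ?thesis by (simp add: power4_eq_xxxx)
qed

lemma le_rung_spacing: "m \<le> rung_spacing m"
proof -
  have "m < 2 ^ m" by simp
  also have "(2::nat) ^ m \<le> 2 ^ 2 ^ (2 * m)"
    using less_exp[of "2 * m"] by (intro power_increasing) linarith+
  finally show ?thesis unfolding rung_spacing_def by simp
qed

lemma cube_le_rung_spacing_sq: "(m + 1) ^ 3 \<le> rung_spacing m * rung_spacing m"
proof -
  have "(m + 1) ^ 3 \<le> (2 ^ m) ^ 3"
    using less_exp[of m] by (intro power_mono) (simp_all add: Suc_leI)
  also have "\<dots> = 2 ^ (3 * m)" by (simp flip: power_mult)
  also have "\<dots> \<le> 2 ^ 2 ^ (2 * m + 1)"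
    using less_exp[of "2 * m"] by (intro power_increasing) (simp_all del: less_exp)
  finally show ?thesis by (simp only: Y_rung_spacing)
qed

(* Block [qL, (q+1)L) is cut at qL + s q: heights below the cut keep their offset from qK,
   the others keep their offset from (q+1)K - L. *)
definition stretch :: "nat \<Rightarrow> nat \<Rightarrow> (nat \<Rightarrow> nat) \<Rightarrow> nat \<Rightarrow> nat" where
  "stretch L K s j = (if j mod L < s (j div L) then j div L * K + j mod L
                      else (j div L + 1) * K - L + j mod L)"

locale stretch_cut =
  fixes L K :: nat and s :: "nat \<Rightarrow> nat"
  assumes L_ge_2: "2 \<le> L" and double_L_le_K: "2 * L \<le> K"
    and cut_pos: "\<And>q. 0 < s q" and cut_less: "\<And>q. s q < L"
begin

lemma L_le_block_end: "L \<le> (q + 1) * K"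
  using double_L_le_K by (simp add: trans_le_add1)

lemma stretch_less: "stretch L K s j < (j div L + 1) * K"
proof -
  have "j mod L < L" using L_ge_2 by simp
  then show ?thesis using double_L_le_K L_le_block_end[of "j div L"] unfolding stretch_def by auto
qed

lemma stretch_ge: "j div L * K \<le> stretch L K s j"
proof -
  have "j div L * K + L \<le> (j div L + 1) * K" using double_L_le_K by simp
  then show ?thesis using L_le_block_end[of "j div L"] unfolding stretch_def by auto
qed

lemma stretch_strict_mono: assumes "j1 < j2" shows "stretch L K s j1 < stretch L K s j2"
proof (cases "j1 div L < j2 div L")
  case True
  then have "(j1 div L + 1) * K \<le> j2 div L * K" by (intro mult_le_mono1) simp
  then show ?thesis using stretch_less[of j1] stretch_ge[of j2] by linarith
next
  case False
  then have q: "j1 div L = j2 div L" using assms div_le_mono[of j1 j2 L] by simp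
  then have r: "j1 mod L < j2 mod L" using assms by (metis div_mult_mod_eq add_less_cancel_left)
  have "j2 mod L < L" using L_ge_2 by simp
  then show ?thesis
    using q r cut_less double_L_le_K L_le_block_end[of "j1 div L"] unfolding stretch_def
    by (auto simp: algebra_simps)
qed

lemma stretch_inj: "stretch L K s j1 = stretch L K s j2 \<Longrightarrow> j1 = j2"
  by (metis stretch_strict_mono less_irrefl nat_neq_iff)

lemma stretch_multiple: "L dvd j \<Longrightarrow> stretch L K s j = j div L * K"
  using cut_pos unfolding stretch_def by auto

lemma stretch_Suc:
  assumes "\<And>q. j + 1 \<noteq> q * L + s q"
  shows "stretch L K s (j + 1) = stretch L K s j + 1"
proof (cases "(j + 1) mod L = 0")
  case True
  then obtain q where q: "j + 1 = (q + 1) * L"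
    by (metis Suc_eq_plus1 add_eq_0_iff_both_eq_0 mod_eq_0_iff_dvd dvd_def mult.commute
        mult_0_right not0_implies_Suc zero_neq_one)
  define r where "r = L - 1"
  have "j = r + q * L" "r < L" using q L_ge_2 unfolding r_def by (simp_all add: algebra_simps)
  then have "j div L = q" "j mod L = r" by simp_all
  then have "j div L = q" "j mod L = L - 1" unfolding r_def .
  moreover have "(j + 1) div L = q + 1" "(j + 1) mod L = 0" using q L_ge_2 by simp_all
  ultimately show ?thesis
    using cut_pos[of "q + 1"] cut_less[of q] L_le_block_end[of q] L_ge_2 unfolding stretch_def by auto
next
  case False
  then have d: "(j + 1) div L = j div L" "(j + 1) mod L = j mod L + 1"
    by (metis Suc_eq_plus1 mod_Suc div_Suc)+
  have "j + 1 = j div L * L + (j mod L + 1)" by simp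
  then have "j mod L + 1 \<noteq> s (j div L)" using assms[of "j div L"] by metis
  then show ?thesis using d L_le_block_end[of "j div L"] L_ge_2 unfolding stretch_def by auto
qed

lemma stretch_le: assumes "j \<le> L * F" shows "stretch L K s j \<le> K * F"
proof (cases "L dvd j")
  case True
  then show ?thesis
    using stretch_multiple div_le_mono[OF assms, of L] L_ge_2 by (simp add: mult.commute)
next
  case False
  then have "j div L \<noteq> F" using assms div_times_less_eq_dividend[of j L]
    by (metis dvd_triv_left le_antisym mult.commute)
  then have "j div L < F" using div_le_mono[OF assms, of L] L_ge_2 by simp
  then have "(j div L + 1) * K \<le> K * F" using mult_le_mono1[of "j div L + 1" F K] by (simp add: mult.commute)
  then show ?thesis using stretch_less[of j] by linarith
qed

end

type_synonym vertex = "nat \<times> nat \<times> nat"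

definition vert_edge :: "vertex \<Rightarrow> vertex set" where
  "vert_edge = (\<lambda>(m, i, j). {(m, i, j), (m, i, j + 1)})"

definition rung_edge :: "vertex \<Rightarrow> vertex set" where
  "rung_edge = (\<lambda>(m, i, j). {(m, i, j), (m, i + 1, j)})"

lemma vert_edge_simp [simp]: "vert_edge (m, i, j) = {(m, i, j), (m, i, j + 1)}"
  by (simp add: vert_edge_def)

lemma rung_edge_simp [simp]: "rung_edge (m, i, j) = {(m, i, j), (m, i + 1, j)}"
  by (simp add: rung_edge_def)

lemma vert_edge_inj: "vert_edge x = vert_edge y \<Longrightarrow> x = y"
  by (cases x; cases y) (auto simp: doubleton_eq_iff)

lemma rung_edge_inj: "rung_edge x = rung_edge y \<Longrightarrow> x = y"
  by (cases x; cases y) (auto simp: doubleton_eq_iff)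

lemma vert_edge_neq_rung_edge: "vert_edge x \<noteq> rung_edge y"
  by (cases x; cases y) (auto simp: doubleton_eq_iff)

definition column_path :: "nat \<Rightarrow> nat \<Rightarrow> nat \<Rightarrow> nat \<Rightarrow> vertex list" where
  "column_path m i a l = map (\<lambda>t. (m, i, t)) [a..<a + l + 1]"

lemma length_column_path: "length (column_path m i a l) = l + 1"
  unfolding column_path_def by simp

lemma nth_column_path: "k \<le> l \<Longrightarrow> column_path m i a l ! k = (m, i, a + k)"
  unfolding column_path_def by (simp del: upt_Suc)

lemma set_column_path: "set (column_path m i a l) = {(m, i, t) | t. a \<le> t \<and> t \<le> a + l}"
  unfolding column_path_def by auto

lemma path_edges_singleton: "path_edges [a] = {}"
  unfolding path_edges_def by auto

lemma path_edges_pair: "path_edges [a, b] = {{a, b}}"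
  unfolding path_edges_def by (auto simp: less_Suc_eq)

lemma path_edges_column_path:
  "path_edges (column_path m i a l) = {vert_edge (m, i, t) | t. a \<le> t \<and> t < a + l}"
proof -
  have "path_edges (column_path m i a l) = {vert_edge (m, i, a + k) | k. k < l}"
    unfolding path_edges_def length_column_path by (force simp: nth_column_path)
  also have "\<dots> = {vert_edge (m, i, t) | t. a \<le> t \<and> t < a + l}"
  proof (intro set_eqI iffI; elim CollectE exE conjE)
    fix d t assume "d = vert_edge (m, i, t)" "a \<le> t" "t < a + l"
    then show "d \<in> {vert_edge (m, i, a + k) | k. k < l}" by (intro CollectI exI[of _ "t - a"]) auto
  qed auto
  finally show ?thesis .
qed

lemma is_path_singleton: "a \<in> fst G \<Longrightarrow> is_path G [a] a a"
  unfolding is_path_def by auto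

lemma is_path_pair:
  "a \<noteq> b \<Longrightarrow> a \<in> fst G \<Longrightarrow> b \<in> fst G \<Longrightarrow> {a, b} \<in> snd G \<Longrightarrow> is_path G [a, b] a b"
  unfolding is_path_def by (auto simp: less_Suc_eq)

lemma is_path_column_path:
  assumes "\<And>t. a \<le> t \<Longrightarrow> t \<le> a + l \<Longrightarrow> (m, i, t) \<in> fst G"
    and "\<And>t. a \<le> t \<Longrightarrow> t < a + l \<Longrightarrow> vert_edge (m, i, t) \<in> snd G"
  shows "is_path G (column_path m i a l) (m, i, a) (m, i, a + l)"
proof -
  let ?p = "column_path m i a l"
  have ne: "?p \<noteq> []" unfolding column_path_def by simp
  then have "hd ?p = (m, i, a)" "last ?p = (m, i, a + l)"
    by (simp_all add: hd_conv_nth last_conv_nth length_column_path nth_column_path)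
  moreover have "distinct ?p" unfolding column_path_def by (simp add: distinct_map inj_on_def del: upt_Suc)
  moreover have "set ?p \<subseteq> fst G" using assms(1) unfolding set_column_path by auto
  moreover have "{?p ! k, ?p ! (k + 1)} \<in> snd G" if "k + 1 < length ?p" for k
    using that assms(2)[of "a + k"] by (simp add: length_column_path nth_column_path)
  ultimately show ?thesis using ne unfolding is_path_def by blast
qed

lemma X_vertexE:
  assumes "v \<in> fst (Xgraph f)"
  obtains m i j where "v = (m, i, j)" "1 \<le> m" "i < f m" "j \<le> rung_spacing m * f m"
  using assms unfolding Xgraph_def XnV_def ladderV_def rung_spacing_def by auto

lemma X_edgeE:
  assumes "e \<in> snd (Xgraph f)"
  obtains m i j where "1 \<le> m" "e = vert_edge (m, i, j)" "i < f m" "j < rung_spacing m * f m"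
  | m i j where "1 \<le> m" "e = rung_edge (m, i, j)" "i + 1 < f m" "j \<le> rung_spacing m * f m"
      "rung_spacing m dvd j"
  using assms unfolding Xgraph_def XnE_def ladderE_def rung_spacing_def by auto

lemma Y_vertexI:
  "1 \<le> m \<Longrightarrow> i < f m \<Longrightarrow> j \<le> rung_spacing m * rung_spacing m * f m \<Longrightarrow>
    (m, i, j) \<in> fst (Ygraph f)"
  unfolding Ygraph_def YnV_def ladderV_def Y_rung_spacing by auto

lemma Y_vert_edgeI:
  "1 \<le> m \<Longrightarrow> i < f m \<Longrightarrow> j < rung_spacing m * rung_spacing m * f m \<Longrightarrow>
    vert_edge (m, i, j) \<in> snd (Ygraph f)"
  unfolding Ygraph_def YnE_def ladderE_def Y_rung_spacing by auto

lemma Y_rung_edgeI: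
  assumes "1 \<le> m" "i + 1 < f m" "j \<le> rung_spacing m * rung_spacing m * f m"
    "rung_spacing m * rung_spacing m dvd j"
  shows "rung_edge (m, i, j) \<in> snd (Ygraph f)"
proof -
  have "rung_edge (m, i, j) \<in> YnE f m"
    unfolding YnE_def ladderE_def Y_rung_spacing using assms(2-4) by auto
  then show ?thesis unfolding Ygraph_def using assms(1) by auto
qed

lemma card_XnV: "card (XnV f n) = f n * (rung_spacing n * f n + 1)"
proof -
  have "XnV f n = {n} \<times> {..<f n} \<times> {..rung_spacing n * f n}"
    unfolding XnV_def ladderV_def rung_spacing_def by auto
  then show ?thesis by (simp add: card_cartesian_product)
qed

definition wire_row :: "nat \<Rightarrow> nat \<Rightarrow> nat \<Rightarrow> nat" where
  "wire_row n m i = (if m = n then 0 else i)"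

definition wire_height :: "nat \<Rightarrow> (nat \<Rightarrow> nat \<Rightarrow> nat) \<Rightarrow> nat \<Rightarrow> nat \<Rightarrow> nat" where
  "wire_height n s m j =
     (if m < n then rung_spacing m * j
      else if m = n then j
      else stretch (rung_spacing m) (rung_spacing m * rung_spacing m) (s m) j)"

definition wire_vertex :: "nat \<Rightarrow> (nat \<Rightarrow> nat \<Rightarrow> nat) \<Rightarrow> vertex \<Rightarrow> vertex" where
  "wire_vertex n s = (\<lambda>(m, i, j). (m, wire_row n m i, wire_height n s m j))"

definition vert_path :: "nat \<Rightarrow> (nat \<Rightarrow> nat \<Rightarrow> nat) \<Rightarrow> vertex \<Rightarrow> vertex list" where
  "vert_path n s = (\<lambda>(m, i, j).
     if m < n then column_path m i (rung_spacing m * j) (rung_spacing m)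
     else [wire_vertex n s (m, i, j), wire_vertex n s (m, i, j + 1)])"

definition rung_path :: "nat \<Rightarrow> (nat \<Rightarrow> nat \<Rightarrow> nat) \<Rightarrow> vertex \<Rightarrow> vertex list" where
  "rung_path n s = (\<lambda>(m, i, j).
     if m = n then [wire_vertex n s (m, i, j)]
     else [wire_vertex n s (m, i, j), wire_vertex n s (m, i + 1, j)])"

definition wire_path :: "nat \<Rightarrow> (nat \<Rightarrow> nat \<Rightarrow> nat) \<Rightarrow> vertex set \<Rightarrow> vertex list" where
  "wire_path n s e =
     (if \<exists>x. e = vert_edge x then vert_path n s (SOME x. e = vert_edge x)
      else if \<exists>x. e = rung_edge x then rung_path n s (SOME x. e = rung_edge x)
      else [])"

lemma wire_vertex_simp [simp]: "wire_vertex n s (m, i, j) = (m, wire_row n m i, wire_height n s m j)"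
  by (simp add: wire_vertex_def)

lemma wire_path_vert_edge: "wire_path n s (vert_edge x) = vert_path n s x"
proof -
  have "\<exists>y. vert_edge x = vert_edge y" by blast
  moreover have "(SOME y. vert_edge x = vert_edge y) = x" by (rule some_equality) (auto dest: vert_edge_inj)
  ultimately show ?thesis unfolding wire_path_def by (simp only: if_True)
qed

lemma wire_path_rung_edge: "wire_path n s (rung_edge x) = rung_path n s x"
proof -
  have "\<not> (\<exists>y. rung_edge x = vert_edge y)" using vert_edge_neq_rung_edge by metis
  moreover have "\<exists>y. rung_edge x = rung_edge y" by blast
  moreover have "(SOME y. rung_edge x = rung_edge y) = x" by (rule some_equality) (auto dest: rung_edge_inj)
  ultimately show ?thesis unfolding wire_path_def by (simp only: if_True if_False)
qed

definition lower_box :: "nat \<Rightarrow> vertex set" where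
  "lower_box n = {..<n} \<times> {..<n} \<times> {..rung_spacing (n - 1) * rung_spacing (n - 1) * n}"

lemma card_lower_box_le:
  assumes "2 \<le> n" "2 \<le> F"
  shows "card (lower_box n) \<le> F * (rung_spacing n * F + 1)"
proof -
  define K where "K = rung_spacing (n - 1) * rung_spacing (n - 1)"
  have n: "Suc (n - 1) = n" using assms(1) by simp
  have cube: "n ^ 3 \<le> K" unfolding K_def using cube_le_rung_spacing_sq[of "n - 1"] n by simp
  have L: "rung_spacing n = K * K" unfolding K_def using rung_spacing_Suc[of "n - 1"] n by simp
  have "n * n \<le> n ^ 3" by (simp add: power3_eq_cube)
  also have "\<dots> \<le> K" by (rule cube)
  finally have "n * n \<le> K" .
  have "card (lower_box n) = K * n ^ 3 + n * n"
    unfolding lower_box_def K_def[symmetric] by (simp add: card_cartesian_product power3_eq_cube algebra_simps)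
  also have "\<dots> \<le> K * K + K" using cube \<open>n * n \<le> K\<close> by (intro add_mono mult_le_mono2)
  also have "\<dots> \<le> K * K * (F * F)"
  proof -
    have "K \<le> K * K" using cube assms(1) by (simp add: mult_le_mono1)
    moreover have "4 \<le> F * F" using mult_le_mono[OF assms(2) assms(2)] by simp
    ultimately show ?thesis using mult_le_mono2[of 4 "F * F" "K * K"] by linarith
  qed
  also have "\<dots> \<le> F * (rung_spacing n * F + 1)" unfolding L by (simp add: algebra_simps)
  finally show ?thesis .
qed

locale subgraph_with_cuts =
  fixes f :: "nat \<Rightarrow> nat" and n :: nat and V :: "vertex set" and E :: "vertex set set"
    and s :: "nat \<Rightarrow> nat \<Rightarrow> nat"
  assumes f_one: "f 1 = 1" and f_bounds: "\<forall>p\<ge>2. 2 \<le> f p \<and> f p \<le> p" and n_ge_2: "2 \<le> n"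
    and finite_V: "finite V" and V_subset: "V \<subseteq> fst (Xgraph f)" and E_subset: "E \<subseteq> snd (Xgraph f)"
    and edge_subset_V: "\<forall>e\<in>E. e \<subseteq> V"
    and cut_free: "\<And>m q. n < m \<Longrightarrow>
      0 < s m q \<and> s m q < rung_spacing m \<and> (\<forall>i. (m, i, q * rung_spacing m + s m q) \<notin> V)"
begin

abbreviation \<phi> :: "vertex \<Rightarrow> vertex" where "\<phi> \<equiv> wire_vertex n s"
abbreviation P :: "vertex set \<Rightarrow> vertex list" where "P \<equiv> wire_path n s"
abbreviation h :: "nat \<Rightarrow> nat \<Rightarrow> nat" where "h \<equiv> wire_height n s"

lemma f_le: "1 \<le> m \<Longrightarrow> f m \<le> m"
  using f_one f_bounds by (cases "m = 1") auto

lemma f_n_ge_2: "2 \<le> f n"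
  using f_bounds n_ge_2 by auto

lemma stretch_cut_above: "n < m \<Longrightarrow> stretch_cut (rung_spacing m) (rung_spacing m * rung_spacing m) (s m)"
  using rung_spacing_ge_2[of m] cut_free by unfold_locales auto

lemma wire_height_le:
  assumes "j \<le> rung_spacing m * F" shows "h m j \<le> rung_spacing m * rung_spacing m * F"
proof -
  consider "m < n" | "m = n" | "n < m" by linarith
  then show ?thesis
  proof cases
    case 1
    then show ?thesis using assms by (simp add: wire_height_def mult.assoc)
  next
    case 2
    have "rung_spacing m * F \<le> rung_spacing m * (rung_spacing m * F)"
      using rung_spacing_ge_2[of m] by simp
    then have "j \<le> rung_spacing m * (rung_spacing m * F)" using assms by linarith
    then show ?thesis using 2 by (simp add: wire_height_def mult.assoc)
  next
    case 3
    then show ?thesis using assms stretch_cut.stretch_le[OF stretch_cut_above] by (simp add: wire_height_def)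
  qed
qed

lemma wire_height_multiple:
  "m \<noteq> n \<Longrightarrow> rung_spacing m dvd j \<Longrightarrow> rung_spacing m * rung_spacing m dvd h m j"
  using stretch_cut.stretch_multiple[OF stretch_cut_above, of m j] by (auto simp: wire_height_def)

lemma wire_height_inj: "m \<noteq> n \<Longrightarrow> h m j1 = h m j2 \<Longrightarrow> j1 = j2"
  using rung_spacing_ge_2[of m] stretch_cut.stretch_inj[OF stretch_cut_above, of m j1 j2]
  by (auto simp: wire_height_def split: if_splits)

(* Holds because no vertex of \<Gamma> sits at a cut height (cut_free). *)
lemma wire_height_Suc: "n \<le> m \<Longrightarrow> (m, i, j + 1) \<in> V \<Longrightarrow> h m (j + 1) = h m j + 1"
  using stretch_cut.stretch_Suc[OF stretch_cut_above, of m j] cut_free[of m]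
  by (cases "m = n") (auto simp: wire_height_def, metis)

lemma fst_wire_vertex: "fst (\<phi> x) = fst x"
  by (cases x) simp

lemma wire_vertex_inj: "\<phi> x = \<phi> y \<Longrightarrow> fst x \<noteq> n \<Longrightarrow> x = y"
  by (cases x; cases y) (auto simp: wire_row_def dest: wire_height_inj)

lemma wire_vertex_in_Y: "v \<in> V \<Longrightarrow> \<phi> v \<in> fst (Ygraph f)"
  using V_subset f_n_ge_2 by (fastforce elim!: X_vertexE intro!: Y_vertexI wire_height_le simp: wire_row_def)

lemma vert_edge_in_E:
  assumes "vert_edge (m, i, j) \<in> E"
  shows "1 \<le> m" "i < f m" "j < rung_spacing m * f m" "(m, i, j) \<in> V" "(m, i, j + 1) \<in> V"
proof -
  show "(m, i, j) \<in> V" "(m, i, j + 1) \<in> V" using assms edge_subset_V by auto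
  from assms E_subset have "vert_edge (m, i, j) \<in> snd (Xgraph f)" by blast
  then show "1 \<le> m" "i < f m" "j < rung_spacing m * f m"
    by (cases rule: X_edgeE; metis vert_edge_inj vert_edge_neq_rung_edge prod.inject)+
qed

lemma rung_edge_in_E:
  assumes "rung_edge (m, i, j) \<in> E"
  shows "1 \<le> m" "i + 1 < f m" "j \<le> rung_spacing m * f m" "rung_spacing m dvd j"
    "(m, i, j) \<in> V" "(m, i + 1, j) \<in> V"
proof -
  show "(m, i, j) \<in> V" "(m, i + 1, j) \<in> V" using assms edge_subset_V by auto
  from assms E_subset have "rung_edge (m, i, j) \<in> snd (Xgraph f)" by blast
  then show "1 \<le> m" "i + 1 < f m" "j \<le> rung_spacing m * f m" "rung_spacing m dvd j"
    by (cases rule: X_edgeE; metis rung_edge_inj vert_edge_neq_rung_edge prod.inject)+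
qed

lemma is_path_wire_vert_edge:
  assumes e: "vert_edge (m, i, j) \<in> E"
  shows "is_path (Ygraph f) (P (vert_edge (m, i, j))) (\<phi> (m, i, j)) (\<phi> (m, i, j + 1))"
proof (cases "m < n")
  case True
  have "rung_spacing m * (j + 1) \<le> rung_spacing m * (rung_spacing m * f m)"
    using vert_edge_in_E[OF e] by (intro mult_le_mono2) simp
  then have top: "rung_spacing m * j + rung_spacing m \<le> rung_spacing m * rung_spacing m * f m"
    by (simp add: algebra_simps)
  have "is_path (Ygraph f) (column_path m i (rung_spacing m * j) (rung_spacing m))
      (m, i, rung_spacing m * j) (m, i, rung_spacing m * j + rung_spacing m)"
    using top vert_edge_in_E[OF e] by (intro is_path_column_path Y_vertexI Y_vert_edgeI) auto
  then show ?thesis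
    unfolding wire_path_vert_edge using True by (simp add: vert_path_def wire_height_def wire_row_def algebra_simps)
next
  case False
  note mij = vert_edge_in_E[OF e]
  have Suc: "h m (j + 1) = h m j + 1" using False mij(5) by (intro wire_height_Suc) auto
  have "h m (j + 1) \<le> rung_spacing m * rung_spacing m * f m"
    using mij(3) by (intro wire_height_le) simp
  then have "h m j < rung_spacing m * rung_spacing m * f m" using Suc by simp
  moreover have "wire_row n m i < f m" using mij(2) f_n_ge_2 by (simp add: wire_row_def)
  ultimately have "vert_edge (m, wire_row n m i, h m j) \<in> snd (Ygraph f)"
    using mij(1) by (intro Y_vert_edgeI)
  then show ?thesis
    unfolding wire_path_vert_edge using False Suc wire_vertex_in_Y[OF mij(4)] wire_vertex_in_Y[OF mij(5)]
    by (auto simp: vert_path_def intro!: is_path_pair)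
qed

lemma is_path_wire_rung_edge:
  assumes e: "rung_edge (m, i, j) \<in> E"
  shows "is_path (Ygraph f) (P (rung_edge (m, i, j))) (\<phi> (m, i, j)) (\<phi> (m, i + 1, j))"
proof (cases "m = n")
  case True
  then show ?thesis
    unfolding wire_path_rung_edge using wire_vertex_in_Y[OF rung_edge_in_E(5)[OF e]]
    by (simp add: rung_path_def wire_row_def is_path_singleton)
next
  case False
  note mij = rung_edge_in_E[OF e]
  have "rung_edge (m, i, h m j) \<in> snd (Ygraph f)"
    using mij False by (intro Y_rung_edgeI wire_height_le wire_height_multiple)
  then show ?thesis
    unfolding wire_path_rung_edge using False wire_vertex_in_Y[OF mij(5)] wire_vertex_in_Y[OF mij(6)]
    by (auto simp: rung_path_def wire_row_def intro!: is_path_pair)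
qed

lemma wiring_wire: "wiring (V, E) (Ygraph f) \<phi> P"
  unfolding wiring_def fst_conv snd_conv
proof (intro conjI ballI)
  fix e assume e: "e \<in> E"
  with E_subset have "e \<in> snd (Xgraph f)" by blast
  then show "\<exists>u v. e = {u, v} \<and> is_path (Ygraph f) (P e) (\<phi> u) (\<phi> v)"
  proof (cases rule: X_edgeE)
    case (1 m i j)
    then show ?thesis
      using e is_path_wire_vert_edge[of m i j] by (intro exI[of _ "(m, i, j)"] exI[of _ "(m, i, j + 1)"]) simp
  next
    case (2 m i j)
    then show ?thesis
      using e is_path_wire_rung_edge[of m i j] by (intro exI[of _ "(m, i, j)"] exI[of _ "(m, i + 1, j)"]) simp
  qed
qed (rule wire_vertex_in_Y)

lemma card_fibre_le: "card {v \<in> V. \<phi> v = y} \<le> f n"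
proof (cases "fst y = n")
  case True
  have "{v \<in> V. \<phi> v = y} \<subseteq> (\<lambda>i. (n, i, snd (snd y))) ` {..<f n}"
  proof
    fix v assume v: "v \<in> {v \<in> V. \<phi> v = y}"
    then have "v \<in> fst (Xgraph f)" using V_subset by blast
    then obtain m i j where mij: "v = (m, i, j)" "i < f m" by (rule X_vertexE)
    then have y: "y = (m, wire_row n m i, h m j)" using v by simp
    with True have "m = n" by simp
    with y mij show "v \<in> (\<lambda>i. (n, i, snd (snd y))) ` {..<f n}"
      by (intro image_eqI[of _ _ i]) (simp_all add: wire_height_def)
  qed
  then have "card {v \<in> V. \<phi> v = y} \<le> card ((\<lambda>i. (n, i, snd (snd y))) ` {..<f n})"
    by (intro card_mono) auto
  also have "\<dots> \<le> f n" using card_image_le[of "{..<f n}"] by simp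
  finally show ?thesis .
next
  case False
  then have "\<forall>a\<in>{v \<in> V. \<phi> v = y}. \<forall>b\<in>{v \<in> V. \<phi> v = y}. a = b"
    using wire_vertex_inj fst_wire_vertex by (metis (mono_tags, lifting) mem_Collect_eq)
  then have "card {v \<in> V. \<phi> v = y} \<le> 1" using finite_V by (simp add: card_le_Suc0_iff_eq)
  then show ?thesis using f_n_ge_2 by simp
qed

lemma path_edges_wire_vert_edge:
  assumes "vert_edge (m, i, j) \<in> E"
  shows "path_edges (P (vert_edge (m, i, j))) =
    (if m < n then {vert_edge (m, i, t) | t. rung_spacing m * j \<le> t \<and> t < rung_spacing m * j + rung_spacing m}
     else {vert_edge (\<phi> (m, i, j))})"
proof (cases "m < n")
  case True
  then show ?thesis unfolding wire_path_vert_edge vert_path_def by (simp only: prod.case if_True path_edges_column_path)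
next
  case False
  then have "h m (j + 1) = h m j + 1" using vert_edge_in_E(5)[OF assms] by (intro wire_height_Suc) auto
  then show ?thesis unfolding wire_path_vert_edge using False by (simp add: vert_path_def path_edges_pair)
qed

lemma path_edges_wire_rung_edge:
  "path_edges (P (rung_edge (m, i, j))) = (if m = n then {} else {rung_edge (\<phi> (m, i, j))})"
  unfolding wire_path_rung_edge by (simp add: rung_path_def path_edges_singleton path_edges_pair wire_row_def)

lemma shared_path_edge_vert_edges:
  assumes e1: "vert_edge (m1, i1, j1) \<in> E" and e2: "vert_edge (m2, i2, j2) \<in> E"
    and d1: "d \<in> path_edges (P (vert_edge (m1, i1, j1)))"
    and d2: "d \<in> path_edges (P (vert_edge (m2, i2, j2)))"
  shows "(m1, i1, j1) = (m2, i2, j2) \<or> (m1 = n \<and> m2 = n \<and> j1 = j2)"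
proof -
  have "m1 = m2"
    using d1 d2 fst_wire_vertex vert_edge_inj
    unfolding path_edges_wire_vert_edge[OF e1] path_edges_wire_vert_edge[OF e2]
    by (fastforce split: if_splits)
  show ?thesis
  proof (cases "m1 < n")
    case True
    let ?L = "rung_spacing m1"
    obtain t where t: "d = vert_edge (m1, i1, t)" "?L * j1 \<le> t" "t < ?L * j1 + ?L"
      using d1 True unfolding path_edges_wire_vert_edge[OF e1] by auto
    obtain t' where t': "d = vert_edge (m1, i2, t')" "?L * j2 \<le> t'" "t' < ?L * j2 + ?L"
      using d2 True \<open>m1 = m2\<close> unfolding path_edges_wire_vert_edge[OF e2] by auto
    have "i1 = i2" "t = t'" using t(1) t'(1) vert_edge_inj by blast+
    moreover have "t div ?L = j1" "t' div ?L = j2" using t t' by (auto intro!: div_nat_eqI)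
    ultimately have "j1 = j2" by simp
    with \<open>m1 = m2\<close> \<open>i1 = i2\<close> show ?thesis by simp
  next
    case False
    then have "vert_edge (\<phi> (m1, i1, j1)) = vert_edge (\<phi> (m2, i2, j2))"
      using d1 d2 \<open>m1 = m2\<close>
      unfolding path_edges_wire_vert_edge[OF e1] path_edges_wire_vert_edge[OF e2] by simp
    then have "\<phi> (m1, i1, j1) = \<phi> (m2, i2, j2)" by (rule vert_edge_inj)
    then show ?thesis
      using wire_vertex_inj[of "(m1, i1, j1)"] \<open>m1 = m2\<close> by (cases "m1 = n") (auto simp: wire_height_def)
  qed
qed

lemma shared_path_edge_rung_edges:
  assumes "d \<in> path_edges (P (rung_edge x1))" and "d \<in> path_edges (P (rung_edge x2))"
  shows "x1 = x2"
proof -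
  obtain m1 i1 j1 m2 i2 j2 where x: "x1 = (m1, i1, j1)" "x2 = (m2, i2, j2)" by (cases x1, cases x2)
  with assms have "m1 \<noteq> n" "m2 \<noteq> n" by (auto simp: path_edges_wire_rung_edge simp del: rung_edge_simp)
  with assms x have "rung_edge (\<phi> x1) = rung_edge (\<phi> x2)"
    by (simp add: path_edges_wire_rung_edge del: rung_edge_simp wire_vertex_simp)
  then have "\<phi> x1 = \<phi> x2" by (rule rung_edge_inj)
  then show ?thesis using wire_vertex_inj x \<open>m1 \<noteq> n\<close> by (metis fst_conv)
qed

lemma no_shared_path_edge_vert_rung:
  assumes "vert_edge x1 \<in> E"
  shows "path_edges (P (vert_edge x1)) \<inter> path_edges (P (rung_edge x2)) = {}"
  using assms vert_edge_neq_rung_edge[symmetric] vert_edge_neq_rung_edge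
  by (cases x1, cases x2) (auto simp: path_edges_wire_vert_edge path_edges_wire_rung_edge
      simp del: vert_edge_simp rung_edge_simp split: if_splits)

lemma shared_path_edge:
  assumes e1: "e1 \<in> E" and e2: "e2 \<in> E"
    and d: "d \<in> path_edges (P e1)" "d \<in> path_edges (P e2)"
  shows "e1 = e2 \<or> (\<exists>i1 i2 j. e1 = vert_edge (n, i1, j) \<and> e2 = vert_edge (n, i2, j))"
proof -
  have kind: "(\<exists>x. e = vert_edge x) \<or> (\<exists>x. e = rung_edge x)" if "e \<in> E" for e
    using that E_subset by (blast elim: X_edgeE)
  consider (vert_vert) x1 x2 where "e1 = vert_edge x1" "e2 = vert_edge x2"
    | (vert_rung) x1 x2 where "e1 = vert_edge x1" "e2 = rung_edge x2"
    | (rung_vert) x1 x2 where "e1 = rung_edge x1" "e2 = vert_edge x2"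
    | (rung_rung) x1 x2 where "e1 = rung_edge x1" "e2 = rung_edge x2"
    using kind[OF e1] kind[OF e2] by blast
  then show ?thesis
  proof cases
    case vert_vert
    obtain m1 i1 j1 m2 i2 j2 where "x1 = (m1, i1, j1)" "x2 = (m2, i2, j2)" by (cases x1, cases x2)
    with vert_vert show ?thesis
      using shared_path_edge_vert_edges[of m1 i1 j1 m2 i2 j2] e1 e2 d by auto
  next
    case vert_rung
    then show ?thesis using no_shared_path_edge_vert_rung[of x1 x2] e1 d by blast
  next
    case rung_vert
    then show ?thesis using no_shared_path_edge_vert_rung[of x2 x1] e2 d by blast
  next
    case rung_rung
    then show ?thesis using shared_path_edge_rung_edges[of d x1 x2] d by blast
  qed
qed

lemma card_edges_through_le: "card {e \<in> E. d \<in> path_edges (P e)} \<le> f n"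
proof (cases "\<exists>i0 j0. vert_edge (n, i0, j0) \<in> E \<and> d \<in> path_edges (P (vert_edge (n, i0, j0)))")
  case True
  then obtain i0 j0 where e0: "vert_edge (n, i0, j0) \<in> E" "d \<in> path_edges (P (vert_edge (n, i0, j0)))"
    by blast
  have "{e \<in> E. d \<in> path_edges (P e)} \<subseteq> (\<lambda>i. vert_edge (n, i, j0)) ` {..<f n}"
  proof
    fix e assume "e \<in> {e \<in> E. d \<in> path_edges (P e)}"
    then have e: "e \<in> E" "d \<in> path_edges (P e)" by auto
    then obtain i where "e = vert_edge (n, i, j0)"
      using shared_path_edge[OF e(1) e0(1) e(2) e0(2)] vert_edge_inj by blast
    then show "e \<in> (\<lambda>i. vert_edge (n, i, j0)) ` {..<f n}"
      using vert_edge_in_E(2) e(1) by blast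
  qed
  then have "card {e \<in> E. d \<in> path_edges (P e)} \<le> card ((\<lambda>i. vert_edge (n, i, j0)) ` {..<f n})"
    by (intro card_mono) auto
  also have "\<dots> \<le> f n" using card_image_le[of "{..<f n}"] by simp
  finally show ?thesis .
next
  case False
  then have "\<forall>e1\<in>{e \<in> E. d \<in> path_edges (P e)}. \<forall>e2\<in>{e \<in> E. d \<in> path_edges (P e)}. e1 = e2"
    using shared_path_edge by blast
  then have "card {e \<in> E. d \<in> path_edges (P e)} \<le> 1"
    by (cases "finite {e \<in> E. d \<in> path_edges (P e)}") (simp_all add: card_le_Suc0_iff_eq)
  then show ?thesis using f_n_ge_2 by simp
qed

lemma column_in_lower_box:
  assumes "1 \<le> m" "m < n" "i < f m" "t \<le> rung_spacing m * rung_spacing m * f m"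
  shows "(m, i, t) \<in> lower_box n"
proof -
  have "f m \<le> n" using f_le[OF assms(1)] assms(2) by simp
  moreover have "rung_spacing m * rung_spacing m \<le> rung_spacing (n - 1) * rung_spacing (n - 1)"
    using assms(2) by (intro mult_le_mono rung_spacing_mono) simp_all
  ultimately have "rung_spacing m * rung_spacing m * f m \<le> rung_spacing (n - 1) * rung_spacing (n - 1) * n"
    by (rule mult_le_mono[rotated])
  then show ?thesis unfolding lower_box_def using assms \<open>f m \<le> n\<close> by auto
qed

lemma set_wire_path_subset:
  assumes e: "e \<in> E" shows "set (P e) \<subseteq> \<phi> ` e \<union> lower_box n"
proof -
  from e E_subset have "e \<in> snd (Xgraph f)" by blast
  then show ?thesis
  proof (cases rule: X_edgeE)
    case (1 m i j)
    show ?thesis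
    proof (cases "m < n")
      case True
      have "rung_spacing m * (j + 1) \<le> rung_spacing m * (rung_spacing m * f m)"
        using 1 by (intro mult_le_mono2) simp
      then have "set (P e) \<subseteq> lower_box n"
        using 1 True
        by (auto simp: wire_path_vert_edge vert_path_def set_column_path algebra_simps
            simp del: vert_edge_simp intro!: column_in_lower_box)
      then show ?thesis by blast
    next
      case False
      then show ?thesis unfolding 1(2) wire_path_vert_edge by (auto simp: vert_path_def)
    qed
  next
    case (2 m i j)
    then show ?thesis unfolding 2(2) wire_path_rung_edge by (auto simp: rung_path_def)
  qed
qed

lemma coarse_wiring_wire: "coarse_wiring (f n) (V, E) (Ygraph f) \<phi> P"
  unfolding coarse_wiring_def fst_conv snd_conv
  using wiring_wire card_fibre_le card_edges_through_le by blast

lemma wiring_volume_wire_le: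
  assumes "card V \<le> card (XnV f n)"
  shows "wiring_volume (V, E) \<phi> P \<le> 2 * card (XnV f n)"
proof -
  have "\<phi> ` V \<union> (\<Union>e\<in>E. set (P e)) \<subseteq> \<phi> ` V \<union> lower_box n"
    using set_wire_path_subset edge_subset_V by blast
  moreover have "finite (\<phi> ` V \<union> lower_box n)" using finite_V by (simp add: lower_box_def)
  ultimately have "wiring_volume (V, E) \<phi> P \<le> card (\<phi> ` V \<union> lower_box n)"
    unfolding wiring_volume_def fst_conv snd_conv by (rule card_mono[rotated])
  also have "\<dots> \<le> card V + card (lower_box n)"
    using card_Un_le card_image_le[OF finite_V] by (meson add_le_mono1 order_trans)
  also have "\<dots> \<le> 2 * card (XnV f n)"
    using assms card_lower_box_le[OF n_ge_2 f_n_ge_2] by (simp add: card_XnV)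
  finally show ?thesis .
qed

end

lemma card_XnV_less_rung_spacing:
  assumes "f n \<le> n" "n < m"
  shows "card (XnV f n) + 1 < rung_spacing m"
proof -
  define A where "A = rung_spacing n"
  have "2 \<le> A" "n \<le> A" unfolding A_def by (rule rung_spacing_ge_2, rule le_rung_spacing)
  then have "card (XnV f n) + 1 \<le> A * (A * A + 1) + 1"
    unfolding card_XnV A_def[symmetric] using assms(1) by (intro add_le_mono1 mult_le_mono) auto
  also have "\<dots> < A * A * (A * A)"
  proof -
    have "2 * (A * A * A) \<le> A * (A * A * A)" using \<open>2 \<le> A\<close> by (rule mult_le_mono1)
    moreover have "4 * A \<le> A * A * A"
      using mult_le_mono[OF \<open>2 \<le> A\<close> \<open>2 \<le> A\<close>] by (intro mult_le_mono1) simp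
    moreover have "A * (A * A + 1) = A * A * A + A" "A * A * (A * A) = A * (A * A * A)"
      by (simp_all add: algebra_simps)
    ultimately show ?thesis using \<open>2 \<le> A\<close> by linarith
  qed
  also have "\<dots> = rung_spacing (Suc n)" unfolding A_def by (rule rung_spacing_Suc[symmetric])
  also have "\<dots> \<le> rung_spacing m" using assms(2) by (intro rung_spacing_mono) simp
  finally show ?thesis by simp
qed

lemma exists_free_height:
  assumes "finite V" "card V + 1 < L"
  shows "\<exists>t. 0 < t \<and> t < L \<and> (\<forall>i. (m, i, q * L + t) \<notin> V)"
proof (rule ccontr)
  assume no_free: "\<not> ?thesis"
  have "{1..<L} \<subseteq> (\<lambda>v. snd (snd v) - q * L) ` V"
  proof
    fix t assume "t \<in> {1..<L}"
    with no_free obtain i where "(m, i, q * L + t) \<in> V" by auto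
    then show "t \<in> (\<lambda>v. snd (snd v) - q * L) ` V" by (rule rev_image_eqI) simp
  qed
  then have "card {1..<L} \<le> card ((\<lambda>v. snd (snd v) - q * L) ` V)"
    using assms(1) by (intro card_mono) auto
  also have "\<dots> \<le> card V" using assms(1) by (rule card_image_le)
  finally show False using assms(2) by simp
qed

lemma small_subgraph_coarse_wiring:
  assumes f_one: "f 1 = 1" and f_bounds: "\<forall>p\<ge>2. 2 \<le> f p \<and> f p \<le> p" and n_ge_2: "2 \<le> n"
    and \<Gamma>: "finite_subgraph \<Gamma> (Xgraph f)" "card (fst \<Gamma>) \<le> card (XnV f n)"
  shows "\<exists>\<phi> P. coarse_wiring (f n) \<Gamma> (Ygraph f) \<phi> P \<and> wiring_volume \<Gamma> \<phi> P \<le> 2 * card (XnV f n)"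
proof -
  obtain V E where VE: "\<Gamma> = (V, E)" by (cases \<Gamma>)
  have sub: "finite V" "V \<subseteq> fst (Xgraph f)" "E \<subseteq> snd (Xgraph f)" "\<forall>e\<in>E. e \<subseteq> V"
    using \<Gamma>(1) unfolding VE finite_subgraph_def by auto
  have "card V + 1 < rung_spacing m" if "n < m" for m
    using \<Gamma>(2) card_XnV_less_rung_spacing[of f n m] f_bounds n_ge_2 that unfolding VE by auto
  then have "\<forall>m q. \<exists>t. n < m \<longrightarrow> 0 < t \<and> t < rung_spacing m \<and> (\<forall>i. (m, i, q * rung_spacing m + t) \<notin> V)"
    using exists_free_height[OF sub(1)] by blast
  then obtain s where "\<And>m q. n < m \<Longrightarrow>
      0 < s m q \<and> s m q < rung_spacing m \<and> (\<forall>i. (m, i, q * rung_spacing m + s m q) \<notin> V)"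
    by metis
  with f_one f_bounds n_ge_2 sub interpret subgraph_with_cuts f n V E s
    by unfold_locales auto
  show ?thesis unfolding VE using coarse_wiring_wire wiring_volume_wire_le \<Gamma>(2) VE by auto
qed

lemma wir_fun_le:
  assumes "\<And>\<Gamma>. finite_subgraph \<Gamma> X \<Longrightarrow> card (fst \<Gamma>) \<le> N \<Longrightarrow>
    \<exists>\<phi> P. coarse_wiring k \<Gamma> Y \<phi> P \<and> wiring_volume \<Gamma> \<phi> P \<le> B"
  shows "wir_fun k X Y N \<le> enat B"
  unfolding wir_fun_def
proof (rule Sup_least)
  fix x assume "x \<in> {wir k \<Gamma> Y | \<Gamma>. finite_subgraph \<Gamma> X \<and> card (fst \<Gamma>) \<le> N}"
  then obtain \<Gamma> where x: "x = wir k \<Gamma> Y" "finite_subgraph \<Gamma> X" "card (fst \<Gamma>) \<le> N" by blast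
  then obtain \<phi> P where w: "coarse_wiring k \<Gamma> Y \<phi> P" "wiring_volume \<Gamma> \<phi> P \<le> B"
    using assms by blast
  have "x \<le> enat (wiring_volume \<Gamma> \<phi> P)"
    unfolding x(1) wir_def using w(1) by (intro Inf_lower) blast
  also have "\<dots> \<le> enat B" using w(2) by simp
  finally show "x \<le> enat B" .
qed

theorem lemma4p2:
  fixes f :: "nat \<Rightarrow> nat" and n :: nat
  assumes f_one: "f 1 = 1"
    and f_surj: "\<forall>m\<ge>1. \<exists>p\<ge>1. f p = m"
    and f_bounds: "\<forall>p\<ge>2. 2 \<le> f p \<and> f p \<le> p"
    and f_inf: "\<forall>k\<ge>2. infinite {p. p \<ge> 1 \<and> f p = k}"
    and n2: "n \<ge> 2"
  shows "(\<forall>\<Gamma>. finite_subgraph \<Gamma> (Xgraph f) \<and> card (fst \<Gamma>) \<le> card (XnV f n) \<longrightarrow>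
            (\<exists>\<phi> P. coarse_wiring (f n) \<Gamma> (Ygraph f) \<phi> P
                   \<and> wiring_volume \<Gamma> \<phi> P \<le> 2 * card (XnV f n)))
       \<and> wir_fun (f n) (Xgraph f) (Ygraph f) (card (XnV f n)) \<le> enat (2 * card (XnV f n))"
  using small_subgraph_coarse_wiring[OF f_one f_bounds n2]
  by (auto intro: wir_fun_le)

end
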